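(* Let $\beta>1$. Then $$[0,1)\setminus\mathcal U=\bigcup_{r\in\mathbb Q_{(\beta)}}I_r^*.$$
   Context: Let $\gamma=\beta-1$ if $\beta$ is an integer and $\gamma=\lfloor\beta\rfloor$ otherwise. $T_\beta(x)=\beta x-\lfloor\beta x\rfloor$ on $[0,1)$. The greedy $\beta$-expansion of $x\in[0,1)$ is $b(x,\beta)=(b_i)$ with $b_i=\lfloor\beta T_\beta^{i-1}(x)\rfloor$. The quasi-greedy $\beta$-expansion $\alpha(\beta)$ of $1$ is the lexicographically largest sequence in $\{0,\dots,\gamma\}^{\mathbb N}$, not eventually zero, with $1=\sum_i\alpha(\beta)_i\beta^{-i}$. $\sigma$ is the left shift, $\prec,\preceq$ the lexicographic order, and $\pi((x_i))=\sum_i x_i\beta^{-i}$. $\Sigma_\beta=\{\omega\in\{0,\dots,\gamma\}^{\mathbb N}\colon\sigma^k(\omega)\prec\alpha(\beta)\ \forall k\ge0\}$. A number $r\in(0,1)$ is $\beta$-rational if $b(r,\beta)=r_1\cdots r_m0^\infty$ with $r_m\ne0$; $\mathbb Q_{(\beta)}$ is the set of such numbers. For such $r$ define $r^*$ as follows. If $(r_1\cdots r_m)^\infty\in\Sigma_\beta$, then $r^*=\pi((r_1\cdots r_m)^\infty)$. Otherwise, if $r_1=\gamma$, set $r^*=\pi(\alpha(\beta))=1$; if $r_1<\gamma$, start from $x^{(0)}=(r_1\cdots r_m)^\infty$ and, as long as $x^{(i)}\notin\Sigma_\beta$, let $j=\min\{k\ge0\colon\sigma^k(x^{(i)})\succeq\alpha(\beta)\}$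 (one has $j\ge1$) and set $x^{(i+1)}=x^{(i)}_1\cdots x^{(i)}_{j-1}(x^{(i)}_j+1)0^\infty$; this terminates after finitely many steps at a sequence $\tilde r'\in\Sigma_\beta$, and $r^*=\pi(\tilde r')$. Put $I_r^*=(r,r^* )$. For $0<t<1$ let $K(t)=\{x\in[0,1)\colon T_\beta^k(x)\notin(0,t)\ \forall k\ge0\}$, $K(0)=[0,1)$, $K(1)=\{0\}$. A parameter $t\in[0,1]$ is a bifurcation parameter if $t\in\{0,1\}$, or $0<t<1$ and for every $\delta>0$ there is $t'\in(t-\delta,t+\delta)$ with $K(t')\ne K(t)$; $\mathcal U$ is the set of bifurcation parameters in $[0,1)$. *)

theory Defs
  imports Complex_Main
begin

(* Conventions: digit sequences are maps nat => nat, indexed from 0,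
   so  w 0  is the paper's  w_1.  *)

definition gam :: "real \<Rightarrow> nat" where
  "gam \<beta> = (if \<beta> \<in> \<int> then nat \<lfloor>\<beta>\<rfloor> - 1 else nat \<lfloor>\<beta>\<rfloor>)"

definition Tb :: "real \<Rightarrow> real \<Rightarrow> real" where
  "Tb \<beta> x = \<beta> * x - of_int \<lfloor>\<beta> * x\<rfloor>"

definition greedy :: "real \<Rightarrow> real \<Rightarrow> nat \<Rightarrow> nat" where
  "greedy \<beta> x i = nat \<lfloor>\<beta> * (Tb \<beta> ^^ i) x\<rfloor>"

definition piv :: "real \<Rightarrow> (nat \<Rightarrow> nat) \<Rightarrow> real" where
  "piv \<beta> w = (\<Sum>i. real (w i) / \<beta> ^ Suc i)"

definition lex_less :: "(nat \<Rightarrow> nat) \<Rightarrow> (nat \<Rightarrow> nat) \<Rightarrow> bool" where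
  "lex_less x y = (\<exists>n. (\<forall>i<n. x i = y i) \<and> x n < y n)"

definition lex_le :: "(nat \<Rightarrow> nat) \<Rightarrow> (nat \<Rightarrow> nat) \<Rightarrow> bool" where
  "lex_le x y = (lex_less x y \<or> x = y)"

definition shift :: "nat \<Rightarrow> (nat \<Rightarrow> nat) \<Rightarrow> nat \<Rightarrow> nat" where
  "shift k w = (\<lambda>i. w (i + k))"

definition qg_cands :: "real \<Rightarrow> (nat \<Rightarrow> nat) set" where
  "qg_cands \<beta> = {w. (\<forall>i. w i \<le> gam \<beta>) \<and> (\<forall>N. \<exists>i\<ge>N. w i \<noteq> 0) \<and> piv \<beta> w = 1}"

(* quasi-greedy expansion of 1: the lexicographically largest candidate *)
definition alpha :: "real \<Rightarrow> nat \<Rightarrow> nat" where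
  "alpha \<beta> = (THE w. w \<in> qg_cands \<beta> \<and> (\<forall>v\<in>qg_cands \<beta>. lex_le v w))"

definition SigmaB :: "real \<Rightarrow> (nat \<Rightarrow> nat) set" where
  "SigmaB \<beta> = {w. (\<forall>i. w i \<le> gam \<beta>) \<and> (\<forall>k. lex_less (shift k w) (alpha \<beta>))}"

definition beta_rational :: "real \<Rightarrow> real \<Rightarrow> bool" where
  "beta_rational \<beta> r = (0 < r \<and> r < 1 \<and>
     (\<exists>m>0. greedy \<beta> r (m - 1) \<noteq> 0 \<and> (\<forall>i\<ge>m. greedy \<beta> r i = 0)))"

definition QB :: "real \<Rightarrow> real set" where
  "QB \<beta> = {r. beta_rational \<beta> r}"

definition rlen :: "real \<Rightarrow> real \<Rightarrow> nat" where
  "rlen \<beta> r = (THE m. m > 0 \<and> greedy \<beta> r (m - 1) \<noteq> 0 \<and> (\<forall>i\<ge>m. greedy \<beta> r i = 0))"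

definition rper :: "real \<Rightarrow> real \<Rightarrow> nat \<Rightarrow> nat" where
  "rper \<beta> r = (\<lambda>i. greedy \<beta> r (i mod rlen \<beta> r))"

(* one step of the algorithm: j = min{k \<ge> 0. \<sigma>^k x \<succeq> \<alpha>(\<beta>)};
   x_1...x_{j-1} (x_j + 1) 0^\<infinity>   (0-indexed: positions < j-1 kept, position j-1 incremented) *)
definition rstep :: "real \<Rightarrow> (nat \<Rightarrow> nat) \<Rightarrow> nat \<Rightarrow> nat" where
  "rstep \<beta> x = (let j = (LEAST k. lex_le (alpha \<beta>) (shift k x)) in
     (\<lambda>i. if i < j - 1 then x i else if i = j - 1 then x i + 1 else 0))"

definition rtilde :: "real \<Rightarrow> real \<Rightarrow> nat \<Rightarrow> nat" where
  "rtilde \<beta> r = (let x0 = rper \<beta> r;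
                     n = (LEAST n. (rstep \<beta> ^^ n) x0 \<in> SigmaB \<beta>) in (rstep \<beta> ^^ n) x0)"

definition rstar :: "real \<Rightarrow> real \<Rightarrow> real" where
  "rstar \<beta> r = (if rper \<beta> r \<in> SigmaB \<beta> then piv \<beta> (rper \<beta> r)
                else if greedy \<beta> r 0 = gam \<beta> then piv \<beta> (alpha \<beta>)
                else piv \<beta> (rtilde \<beta> r))"

definition Istar :: "real \<Rightarrow> real \<Rightarrow> real set" where
  "Istar \<beta> r = {r<..<rstar \<beta> r}"

definition Kset :: "real \<Rightarrow> real \<Rightarrow> real set" where
  "Kset \<beta> t = (if t = 0 then {0..<1} else if t = 1 then {0}
               else {x \<in> {0..<1}. \<forall>k. (Tb \<beta> ^^ k) x \<notin> {0<..<t}})"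

definition bifurcation :: "real \<Rightarrow> real \<Rightarrow> bool" where
  "bifurcation \<beta> t = (t = 0 \<or> t = 1 \<or>
     (0 < t \<and> t < 1 \<and> (\<forall>\<delta>>0. \<exists>t'\<in>{0..1}. \<bar>t' - t\<bar> < \<delta> \<and> Kset \<beta> t' \<noteq> Kset \<beta> t)))"

definition Ubif :: "real \<Rightarrow> real set" where
  "Ubif \<beta> = {t \<in> {0..<1}. bifurcation \<beta> t}"

end

theory Submission
  imports Defs
begin

text \<open>
  A parameter \<open>t \<in> (0, 1)\<close> fails to be a bifurcation parameter only if its orbit under \<open>T\<^sub>\<beta>\<close>
  returns into \<open>(0, t)\<close>: otherwise \<open>t \<in> K(t)\<close>, but \<open>t \<notin> K(t')\<close> for every \<open>t' > t\<close>. Cutting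
  \<open>b(t, \<beta>)\<close> just before such a return gives a \<open>\<beta>\<close>-rational \<open>r < t\<close>; as \<open>T\<^sup>m t < t\<close>, the
  expansion of \<open>t\<close> lies lexicographically below \<open>(r\<^sub>1\<dots>r\<^sub>m)\<^sup>\<infinity>\<close>, hence below the least
  admissible word above it, whose value is \<open>r\<^sup>*\<close> unless \<open>r\<^sup>* = 1\<close>; so \<open>t < r\<^sup>*\<close>.
  Conversely, the orbit of every \<open>y \<in> (r, r\<^sup>*)\<close> enters \<open>(0, r]\<close>: if it avoided that interval,
  \<open>b(y, \<beta>)\<close> would dominate \<open>(r\<^sub>1\<dots>r\<^sub>m)\<^sup>\<infinity>\<close> and, being admissible, also the word defining
  \<open>r\<^sup>*\<close>, giving \<open>y \<ge> r\<^sup>*\<close>. Hence \<open>K\<close> is constant on \<open>I\<^sub>r\<^sup>*\<close>, which therefore contains no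
  bifurcation parameter.
\<close>

lemma shift_apply: "shift k w i = w (i + k)"
  by (simp add: shift_def)

lemma shift_0 [simp]: "shift 0 w = w"
  by (simp add: shift_def)

lemma shift_shift [simp]: "shift j (shift k w) = shift (j + k) w"
  by (simp add: shift_def ac_simps)

lemma first_difference:
  assumes "x \<noteq> (y :: nat \<Rightarrow> nat)"
  obtains n where "\<forall>i<n. x i = y i" "x n \<noteq> y n"
proof -
  have ex: "\<exists>n. x n \<noteq> y n" using assms by auto
  show ?thesis
  proof (rule that)
    show "x (LEAST n. x n \<noteq> y n) \<noteq> y (LEAST n. x n \<noteq> y n)"
      by (rule LeastI_ex[OF ex])
    show "\<forall>i<(LEAST n. x n \<noteq> y n). x i = y i"
      using not_less_Least by blast
  qed
qed

lemma lex_lessI: "\<forall>i<n. x i = y i \<Longrightarrow> x n < y n \<Longrightarrow> lex_less x y"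
  unfolding lex_less_def by blast

lemma lex_less_irrefl: "\<not> lex_less x x"
  by (auto simp: lex_less_def)

lemma lex_less_trans:
  assumes "lex_less x y" "lex_less y z"
  shows "lex_less x z"
proof -
  obtain m where m: "\<forall>i<m. x i = y i" "x m < y m"
    using assms(1) unfolding lex_less_def by blast
  obtain n where n: "\<forall>i<n. y i = z i" "y n < z n"
    using assms(2) unfolding lex_less_def by blast
  show ?thesis
  proof (cases "m \<le> n")
    case True
    then have "x m < z m" using m n by (cases "m = n") auto
    then show ?thesis using m n True by (intro lex_lessI[of m]) auto
  next
    case False
    then show ?thesis using m n by (intro lex_lessI[of n]) auto
  qed
qed

lemma lex_less_asym: "lex_less x y \<Longrightarrow> \<not> lex_less y x"
  using lex_less_trans lex_less_irrefl by blast

lemma lex_trichotomy: "lex_less x y \<or> x = y \<or> lex_less y x"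
proof (cases "x = y")
  case False
  then obtain n where "\<forall>i<n. x i = y i" "x n \<noteq> y n"
    by (rule first_difference)
  then show ?thesis
    using lex_lessI[of n x y] lex_lessI[of n y x] by (metis linorder_neqE_nat)
qed simp

lemma not_lex_less: "\<not> lex_less x y \<longleftrightarrow> lex_le y x"
  unfolding lex_le_def using lex_trichotomy lex_less_asym lex_less_irrefl by blast

lemma lex_le_refl: "lex_le x x"
  by (simp add: lex_le_def)

lemma lex_le_antisym: "lex_le x y \<Longrightarrow> lex_le y x \<Longrightarrow> x = y"
  unfolding lex_le_def using lex_less_asym by blast

lemma lex_le_trans: "lex_le x y \<Longrightarrow> lex_le y z \<Longrightarrow> lex_le x z"
  unfolding lex_le_def using lex_less_trans by blast

lemma lex_le_less_trans: "lex_le x y \<Longrightarrow> lex_less y z \<Longrightarrow> lex_less x z"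
  unfolding lex_le_def using lex_less_trans by blast

lemma lex_less_le_trans: "lex_less x y \<Longrightarrow> lex_le y z \<Longrightarrow> lex_less x z"
  unfolding lex_le_def using lex_less_trans by blast

lemma lex_le_if_le: "\<forall>i. x i \<le> y i \<Longrightarrow> lex_le x y"
  unfolding lex_le_def lex_less_def
  by (metis first_difference le_neq_implies_less)

lemma lex_less_shift:
  assumes "\<forall>i<d. x i = y i" "x d < y d" "k \<le> d"
  shows "lex_less (shift k x) (shift k y)"
  using assms by (intro lex_lessI[of "d - k"]) (auto simp: shift_def)

lemma lex_less_periodic_if_shift_lex_less:
  assumes periodic: "\<And>i. p (i + n) = p i" and prefix: "\<forall>i<n. p i = w i" and "0 < n"
    and shift_less: "lex_less (shift n w) w"
  shows "lex_less w p"
proof -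
  have "w \<noteq> p"
  proof
    assume "w = p"
    then have "shift n w = w"
      using periodic by (auto simp: shift_def)
    then show False
      using shift_less lex_less_irrefl by simp
  qed
  moreover have "\<not> lex_less p w"
  proof
    assume "lex_less p w"
    then obtain d where d: "\<forall>i<d. p i = w i" "p d < w d"
      unfolding lex_less_def by blast
    have "n \<le> d"
      using d(2) prefix by (metis leI less_irrefl)
    have "lex_less w (shift n w)"
    proof (rule lex_lessI[of "d - n"])
      show "\<forall>i<d - n. w i = shift n w i"
      proof (intro allI impI)
        fix i assume "i < d - n"
        then have "w i = p i" "w (i + n) = p (i + n)"
          using d(1) by auto
        then show "w i = shift n w i"
          using periodic[of i] by (simp add: shift_def)
      qed
      have "w (d - n) = p (d - n)"
        using d(1) \<open>0 < n\<close> \<open>n \<le> d\<close> by simp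
      also have "\<dots> = p d"
        using periodic[of "d - n"] \<open>n \<le> d\<close> by simp
      finally show "w (d - n) < shift n w (d - n)"
        using d(2) \<open>n \<le> d\<close> by (simp add: shift_def)
    qed
    then show False
      using shift_less lex_less_asym by blast
  qed
  ultimately show ?thesis
    using lex_trichotomy by blast
qed

definition bounded_digits :: "(nat \<Rightarrow> nat) \<Rightarrow> bool" where
  "bounded_digits w \<longleftrightarrow> (\<exists>B. \<forall>i. w i \<le> B)"

lemma bounded_digits_shift: "bounded_digits w \<Longrightarrow> bounded_digits (shift k w)"
  unfolding bounded_digits_def by (auto simp: shift_apply)

lemma bounded_digits_le: "bounded_digits w \<Longrightarrow> \<forall>i. v i \<le> w i \<Longrightarrow> bounded_digits v"
  unfolding bounded_digits_def by (meson order_trans)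

locale beta_expansions =
  fixes \<beta> :: real
  assumes beta_gt_1: "\<beta> > 1"
begin

lemma summable_digits:
  assumes "bounded_digits w"
  shows "summable (\<lambda>i. real (w i) / \<beta> ^ Suc i)"
proof -
  obtain B where B: "\<forall>i. w i \<le> B" using assms unfolding bounded_digits_def by blast
  show ?thesis
  proof (rule summable_comparison_test')
    show "summable (\<lambda>i. (real B / \<beta>) * (1 / \<beta>) ^ i)"
      using beta_gt_1 by (intro summable_mult summable_geometric) auto
    have "real (w n) / \<beta> ^ Suc n \<le> real B / \<beta> ^ Suc n" for n
      using B beta_gt_1 by (intro divide_right_mono) auto
    then show "norm (real (w n) / \<beta> ^ Suc n) \<le> (real B / \<beta>) * (1 / \<beta>) ^ n" for n
      using beta_gt_1 by (simp add: power_one_over)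
  qed
qed

lemma piv_nonneg: "bounded_digits w \<Longrightarrow> 0 \<le> piv \<beta> w"
  unfolding piv_def using beta_gt_1 by (intro suminf_nonneg summable_digits) auto

lemma piv_pos: "bounded_digits w \<Longrightarrow> w i \<noteq> 0 \<Longrightarrow> 0 < piv \<beta> w"
  unfolding piv_def using beta_gt_1 by (intro suminf_pos2[OF summable_digits, of _ i]) auto

lemma piv_zero [simp]: "piv \<beta> (\<lambda>_. 0) = 0"
  unfolding piv_def by simp

lemma piv_mono:
  assumes "bounded_digits w" "\<forall>i. v i \<le> w i"
  shows "piv \<beta> v \<le> piv \<beta> w"
  unfolding piv_def using assms beta_gt_1 bounded_digits_le[OF assms]
  by (intro suminf_le summable_digits) (auto intro!: divide_right_mono)

lemma piv_le_geometric:
  fixes B :: nat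
  assumes "\<forall>i. w i \<le> B"
  shows "piv \<beta> w \<le> B / (\<beta> - 1)"
proof -
  have "piv \<beta> w \<le> piv \<beta> (\<lambda>_. B)"
    using assms by (intro piv_mono) (auto simp: bounded_digits_def)
  also have "(\<lambda>i. (real B / \<beta>) * (1 / \<beta>) ^ i) sums ((real B / \<beta>) * (1 / (1 - 1 / \<beta>)))"
    using beta_gt_1 by (intro sums_mult geometric_sums) auto
  then have "piv \<beta> (\<lambda>_. B) = (real B / \<beta>) * (1 / (1 - 1 / \<beta>))"
    unfolding piv_def by (simp add: sums_iff power_one_over)
  also have "\<dots> = B / (\<beta> - 1)"
    using beta_gt_1 by (simp add: divide_simps)
  finally show ?thesis .
qed

lemma piv_shift_Suc:
  assumes "bounded_digits w"
  shows "piv \<beta> (shift n w) = (w n + piv \<beta> (shift (Suc n) w)) / \<beta>"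
proof -
  let ?f = "\<lambda>i. real (w (i + n)) / \<beta> ^ Suc i"
  have "summable ?f"
    using summable_digits[OF bounded_digits_shift[OF assms]] by (simp add: shift_apply)
  then have "(\<Sum>i. ?f (Suc i)) = suminf ?f - ?f 0"
    by (rule suminf_split_head)
  moreover have "(\<Sum>i. ?f (Suc i)) = (\<Sum>i. real (w (i + Suc n)) / \<beta> ^ Suc i) / \<beta>"
    using summable_digits[OF bounded_digits_shift[OF assms, of "Suc n"]]
    by (subst suminf_divide[symmetric]) (auto simp: field_simps shift_apply)
  ultimately show ?thesis
    unfolding piv_def shift_def by (simp add: add_divide_distrib)
qed

lemma piv_diff_common_prefix:
  assumes "bounded_digits v" "bounded_digits w" "\<forall>i<n. v i = w i"
  shows "piv \<beta> v - piv \<beta> w = (piv \<beta> (shift n v) - piv \<beta> (shift n w)) / \<beta> ^ n"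
  using assms(3)
proof (induction n)
  case (Suc n)
  then show ?case
    using piv_shift_Suc[OF assms(1), of n] piv_shift_Suc[OF assms(2), of n]
    by (simp add: diff_divide_distrib add_divide_distrib)
qed simp

lemma piv_diff_first_difference:
  assumes "bounded_digits v" "bounded_digits w" "\<forall>i<d. v i = w i"
  shows "piv \<beta> w - piv \<beta> v =
    (real (w d) - real (v d) + piv \<beta> (shift (Suc d) w) - piv \<beta> (shift (Suc d) v)) / \<beta> ^ Suc d"
proof -
  have "piv \<beta> w - piv \<beta> v = (piv \<beta> (shift d w) - piv \<beta> (shift d v)) / \<beta> ^ d"
    using piv_diff_common_prefix[OF assms(2,1)] assms(3) by simp
  also have "piv \<beta> (shift d w) - piv \<beta> (shift d v) =
      (real (w d) - real (v d) + piv \<beta> (shift (Suc d) w) - piv \<beta> (shift (Suc d) v)) / \<beta>"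
    using piv_shift_Suc[OF assms(1), of d] piv_shift_Suc[OF assms(2), of d]
    by (simp add: diff_divide_distrib add_divide_distrib)
  finally show ?thesis
    by (simp add: mult.commute)
qed

lemma lex_le_imp_piv_le:
  assumes v: "bounded_digits v" and w: "bounded_digits w"
    and tails: "\<forall>k. piv \<beta> (shift k v) \<le> 1" and "lex_le v w"
  shows "piv \<beta> v \<le> piv \<beta> w"
proof (cases "v = w")
  case False
  then obtain d where d: "\<forall>i<d. v i = w i" "v d < w d"
    using \<open>lex_le v w\<close> unfolding lex_le_def lex_less_def by blast
  have "0 \<le> piv \<beta> (shift (Suc d) w)"
    using piv_nonneg[OF bounded_digits_shift[OF w]] .
  moreover have "real (v d) + 1 \<le> real (w d)"
    using d(2) by simp
  ultimately have "0 \<le> real (w d) - real (v d) + piv \<beta> (shift (Suc d) w) - piv \<beta> (shift (Suc d) v)"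
    using tails[rule_format, of "Suc d"] by linarith
  then have "0 \<le> piv \<beta> w - piv \<beta> v"
    unfolding piv_diff_first_difference[OF v w d(1)] using beta_gt_1 by (intro divide_nonneg_pos) simp_all
  then show ?thesis
    by simp
qed simp

lemma lex_less_imp_piv_less:
  assumes v: "bounded_digits v" and w: "bounded_digits w"
    and tails: "\<forall>k. piv \<beta> (shift k v) < 1" and "lex_less v w"
  shows "piv \<beta> v < piv \<beta> w"
proof -
  obtain d where d: "\<forall>i<d. v i = w i" "v d < w d"
    using \<open>lex_less v w\<close> unfolding lex_less_def by blast
  have "0 \<le> piv \<beta> (shift (Suc d) w)"
    using piv_nonneg[OF bounded_digits_shift[OF w]] .
  moreover have "real (v d) + 1 \<le> real (w d)"
    using d(2) by simp
  ultimately have "0 < real (w d) - real (v d) + piv \<beta> (shift (Suc d) w) - piv \<beta> (shift (Suc d) v)"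
    using tails[rule_format, of "Suc d"] by linarith
  then have "0 < piv \<beta> w - piv \<beta> v"
    unfolding piv_diff_first_difference[OF v w d(1)] using beta_gt_1 by (intro divide_pos_pos) simp_all
  then show ?thesis
    by simp
qed

lemma expanding_bounded_eq_0:
  fixes e :: "nat \<Rightarrow> real"
  assumes rec: "\<And>k. e k = e (Suc k) / \<beta>" and bound: "\<And>k. \<bar>e k\<bar> \<le> C"
  shows "e k = 0"
proof (rule ccontr)
  assume nz: "e k \<noteq> 0"
  have scaled: "\<bar>e (k + n)\<bar> = \<beta> ^ n * \<bar>e k\<bar>" for n
  proof (induction n)
    case (Suc n)
    then show ?case
      using rec[of "k + n"] beta_gt_1 by (simp add: abs_divide field_simps)
  qed simp
  obtain n where n: "C / \<bar>e k\<bar> < \<beta> ^ n"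
    using real_arch_pow[OF beta_gt_1] by blast
  then have "C < \<beta> ^ n * \<bar>e k\<bar>"
    using nz by (simp add: divide_less_eq)
  then show False
    using bound[of "k + n"] scaled[of n] by simp
qed

lemma piv_shift_eq_remainder:
  assumes w: "bounded_digits w" and rec: "\<And>k. x k = (w k + x (Suc k)) / \<beta>"
    and bound: "\<And>k. \<bar>x k\<bar> \<le> C"
  shows "piv \<beta> (shift k w) = x k"
proof -
  obtain B where B: "\<forall>i. w i \<le> B" using w unfolding bounded_digits_def by blast
  define e where "e k = piv \<beta> (shift k w) - x k" for k
  have "e k = e (Suc k) / \<beta>" for k
    unfolding e_def using piv_shift_Suc[OF w, of k] rec[of k]
    by (simp add: diff_divide_distrib add_divide_distrib)
  moreover have "\<bar>e k\<bar> \<le> B / (\<beta> - 1) + C" for k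
  proof -
    have "piv \<beta> (shift k w) \<le> B / (\<beta> - 1)"
      using piv_le_geometric[of "shift k w" B] B by (simp add: shift_apply)
    moreover have "0 \<le> piv \<beta> (shift k w)"
      using piv_nonneg[OF bounded_digits_shift[OF w]] .
    ultimately show ?thesis
      unfolding e_def using bound[of k] by linarith
  qed
  ultimately have "e k = 0"
    by (rule expanding_bounded_eq_0)
  then show ?thesis unfolding e_def by simp
qed

end

section \<open>The quasi-greedy expansion of 1\<close>

text \<open>The orbit of 1 under the quasi-greedy map \<open>x \<mapsto> \<beta> x - (\<lceil>\<beta> x\<rceil> - 1)\<close> and its digits;
  they turn out to be \<^const>\<open>alpha\<close>.\<close>

fun qg_rem :: "real \<Rightarrow> nat \<Rightarrow> real" where
  "qg_rem \<beta> 0 = 1"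
| "qg_rem \<beta> (Suc n) = \<beta> * qg_rem \<beta> n - (of_int \<lceil>\<beta> * qg_rem \<beta> n\<rceil> - 1)"

definition qg_digit :: "real \<Rightarrow> nat \<Rightarrow> nat" where
  "qg_digit \<beta> n = nat (\<lceil>\<beta> * qg_rem \<beta> n\<rceil> - 1)"

lemma gam_eq_ceiling: "gam \<beta> = nat \<lceil>\<beta>\<rceil> - 1"
proof (cases "\<beta> \<in> \<int>")
  case True
  then show ?thesis by (auto simp: gam_def elim: Ints_cases)
next
  case False
  then have "\<lceil>\<beta>\<rceil> = \<lfloor>\<beta>\<rfloor> + 1"
    by (metis Ints_of_int ceiling_altdef)
  then show ?thesis using False by (simp add: gam_def nat_add_distrib)
qed

context beta_expansions
begin

lemma real_gam: "real (gam \<beta>) = of_int \<lceil>\<beta>\<rceil> - 1"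
proof -
  have ceil: "\<lceil>\<beta>\<rceil> \<ge> 2" using beta_gt_1 by (simp add: le_ceiling_iff)
  then have "nat \<lceil>\<beta>\<rceil> \<ge> 1" by arith
  then have "real (nat \<lceil>\<beta>\<rceil> - 1) = real (nat \<lceil>\<beta>\<rceil>) - 1" by (simp add: of_nat_diff)
  also have "real (nat \<lceil>\<beta>\<rceil>) = of_int \<lceil>\<beta>\<rceil>" using ceil by simp
  finally show ?thesis by (simp add: gam_eq_ceiling)
qed

lemma gam_less: "real (gam \<beta>) < \<beta>"
  using real_gam by linarith

lemma gam_ge: "\<beta> - 1 \<le> real (gam \<beta>)"
  using real_gam by linarith

lemma gam_pos: "0 < gam \<beta>"
proof -
  have "0 < real (gam \<beta>)" using gam_ge beta_gt_1 by linarith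
  then show ?thesis by simp
qed

lemma qg_rem_bounds: "0 < qg_rem \<beta> n \<and> qg_rem \<beta> n \<le> 1"
proof (induction n)
  case (Suc n)
  let ?x = "\<beta> * qg_rem \<beta> n"
  have "of_int \<lceil>?x\<rceil> - 1 < ?x" "?x \<le> of_int \<lceil>?x\<rceil>" by linarith+
  then show ?case by simp
qed simp

lemma real_qg_digit: "real (qg_digit \<beta> n) = of_int \<lceil>\<beta> * qg_rem \<beta> n\<rceil> - 1"
proof -
  have "\<beta> * qg_rem \<beta> n > 0" using qg_rem_bounds[of n] beta_gt_1 by simp
  then have "\<lceil>\<beta> * qg_rem \<beta> n\<rceil> \<ge> 1" by (simp add: le_ceiling_iff)
  then show ?thesis unfolding qg_digit_def by simp
qed

lemma qg_rem_eq: "qg_rem \<beta> n = (qg_digit \<beta> n + qg_rem \<beta> (Suc n)) / \<beta>"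
  using beta_gt_1 by (simp add: real_qg_digit)

lemma qg_digit_le_gam: "qg_digit \<beta> n \<le> gam \<beta>"
proof -
  have "\<beta> * qg_rem \<beta> n \<le> \<beta>" using qg_rem_bounds[of n] beta_gt_1 by simp
  then have "\<lceil>\<beta> * qg_rem \<beta> n\<rceil> \<le> \<lceil>\<beta>\<rceil>" by (rule ceiling_mono)
  then show ?thesis unfolding qg_digit_def gam_eq_ceiling by linarith
qed

lemma qg_digit_0: "qg_digit \<beta> 0 = gam \<beta>"
  by (simp add: qg_digit_def gam_eq_ceiling nat_diff_distrib)

lemma bounded_qg_digit: "bounded_digits (qg_digit \<beta>)"
  unfolding bounded_digits_def using qg_digit_le_gam by blast

lemma piv_shift_qg_digit: "piv \<beta> (shift n (qg_digit \<beta>)) = qg_rem \<beta> n"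
proof (rule piv_shift_eq_remainder[OF bounded_qg_digit qg_rem_eq])
  show "\<bar>qg_rem \<beta> k\<bar> \<le> 1" for k
    using qg_rem_bounds[of k] by (simp add: abs_le_iff)
qed

lemma qg_digit_not_eventually_0: "\<exists>i\<ge>N. qg_digit \<beta> i \<noteq> 0"
proof (rule ccontr)
  assume "\<not> ?thesis"
  then have "shift N (qg_digit \<beta>) = (\<lambda>_. 0)"
    by (auto simp: shift_apply)
  then have "piv \<beta> (shift N (qg_digit \<beta>)) = 0"
    by simp
  then show False
    using piv_shift_qg_digit[of N] qg_rem_bounds[of N] by simp
qed

lemma qg_digit_in_qg_cands: "qg_digit \<beta> \<in> qg_cands \<beta>"
  unfolding qg_cands_def
  using qg_digit_le_gam qg_digit_not_eventually_0 piv_shift_qg_digit[of 0] by simp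

lemma qg_cands_lex_le_qg_digit:
  assumes v: "v \<in> qg_cands \<beta>"
  shows "lex_le v (qg_digit \<beta>)"
proof (rule ccontr)
  assume "\<not> lex_le v (qg_digit \<beta>)"
  then obtain n where n: "\<forall>i<n. qg_digit \<beta> i = v i" "qg_digit \<beta> n < v n"
    unfolding not_lex_less[symmetric] lex_less_def by blast
  have bv: "bounded_digits v" and pv: "piv \<beta> v = 1"
    using v unfolding qg_cands_def bounded_digits_def by blast+
  obtain i where i: "i \<ge> Suc n" "v i \<noteq> 0"
    using v unfolding qg_cands_def by blast
  then have "shift (Suc n) v (i - Suc n) \<noteq> 0"
    by (simp add: shift_apply)
  then have "0 < piv \<beta> (shift (Suc n) v)"
    by (rule piv_pos[OF bounded_digits_shift[OF bv]])
  moreover have "piv \<beta> (shift (Suc n) (qg_digit \<beta>)) \<le> 1"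
    using piv_shift_qg_digit qg_rem_bounds by simp
  ultimately have "0 < real (v n) - real (qg_digit \<beta> n) +
      piv \<beta> (shift (Suc n) v) - piv \<beta> (shift (Suc n) (qg_digit \<beta>))"
    using n(2) by linarith
  then have "0 < piv \<beta> v - piv \<beta> (qg_digit \<beta>)"
    unfolding piv_diff_first_difference[OF bounded_qg_digit bv n(1)]
    using beta_gt_1 by (intro divide_pos_pos) simp_all
  then show False
    using pv piv_shift_qg_digit[of 0] by simp
qed

lemma alpha_eq_qg_digit: "alpha \<beta> = qg_digit \<beta>"
  unfolding alpha_def
  using qg_digit_in_qg_cands qg_cands_lex_le_qg_digit lex_le_antisym by (intro the_equality) blast+

lemma alpha_0: "alpha \<beta> 0 = gam \<beta>"
  by (simp add: alpha_eq_qg_digit qg_digit_0)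

lemma bounded_alpha: "bounded_digits (alpha \<beta>)"
  by (simp add: alpha_eq_qg_digit bounded_qg_digit)

lemma piv_shift_alpha_le_1: "piv \<beta> (shift n (alpha \<beta>)) \<le> 1"
  using alpha_eq_qg_digit piv_shift_qg_digit qg_rem_bounds by simp

lemma piv_alpha: "piv \<beta> (alpha \<beta>) = 1"
  using alpha_eq_qg_digit piv_shift_qg_digit[of 0] by simp

lemma zero_lex_less_alpha: "lex_less (\<lambda>_. 0) (alpha \<beta>)"
  using alpha_0 gam_pos by (intro lex_lessI[of 0]) auto

end

lemma Tb_range: "0 \<le> Tb \<beta> x \<and> Tb \<beta> x < 1"
  unfolding Tb_def by linarith

context beta_expansions
begin

lemma Tb_funpow_range: "0 \<le> y \<Longrightarrow> y < 1 \<Longrightarrow> 0 \<le> (Tb \<beta> ^^ k) y \<and> (Tb \<beta> ^^ k) y < 1"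
  by (cases k) (simp_all add: Tb_range)

lemma real_greedy:
  assumes "0 \<le> (Tb \<beta> ^^ i) y"
  shows "real (greedy \<beta> y i) = of_int \<lfloor>\<beta> * (Tb \<beta> ^^ i) y\<rfloor>"
  using assms beta_gt_1 unfolding greedy_def by simp

lemma Tb_funpow_Suc:
  assumes "0 \<le> (Tb \<beta> ^^ i) y"
  shows "(Tb \<beta> ^^ Suc i) y = \<beta> * (Tb \<beta> ^^ i) y - greedy \<beta> y i"
  using real_greedy[OF assms] by (simp add: Tb_def)

lemma greedy_le_gam:
  assumes "0 \<le> y" "y < 1"
  shows "greedy \<beta> y i \<le> gam \<beta>"
proof -
  have T: "0 \<le> (Tb \<beta> ^^ i) y" "(Tb \<beta> ^^ i) y < 1"
    using Tb_funpow_range[OF assms] by auto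
  then have "\<beta> * (Tb \<beta> ^^ i) y < \<beta>"
    using beta_gt_1 by simp
  then have "of_int \<lfloor>\<beta> * (Tb \<beta> ^^ i) y\<rfloor> < (of_int \<lceil>\<beta>\<rceil> :: real)"
    using of_int_floor_le[of "\<beta> * (Tb \<beta> ^^ i) y"] le_of_int_ceiling[of \<beta>] by linarith
  then have "\<lfloor>\<beta> * (Tb \<beta> ^^ i) y\<rfloor> < \<lceil>\<beta>\<rceil>"
    by (simp only: of_int_less_iff)
  then have "real (greedy \<beta> y i) \<le> of_int \<lceil>\<beta>\<rceil> - 1"
    using real_greedy[OF T(1)] by simp
  then show ?thesis using real_gam by simp
qed

lemma bounded_greedy: "0 \<le> y \<Longrightarrow> y < 1 \<Longrightarrow> bounded_digits (greedy \<beta> y)"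
  unfolding bounded_digits_def using greedy_le_gam by blast

lemma shift_greedy: "shift k (greedy \<beta> y) = greedy \<beta> ((Tb \<beta> ^^ k) y)"
  by (rule ext) (simp add: shift_apply greedy_def funpow_add)

lemma piv_shift_greedy:
  assumes "0 \<le> y" "y < 1"
  shows "piv \<beta> (shift k (greedy \<beta> y)) = (Tb \<beta> ^^ k) y"
proof (rule piv_shift_eq_remainder[OF bounded_greedy[OF assms]])
  show "(Tb \<beta> ^^ k) y = (greedy \<beta> y k + (Tb \<beta> ^^ Suc k) y) / \<beta>" for k
    using Tb_funpow_Suc Tb_funpow_range[OF assms, of k] beta_gt_1 by (simp add: field_simps)
  show "\<bar>(Tb \<beta> ^^ k) y\<bar> \<le> 1" for k
    using Tb_funpow_range[OF assms, of k] by simp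
qed

lemma piv_greedy: "0 \<le> y \<Longrightarrow> y < 1 \<Longrightarrow> piv \<beta> (greedy \<beta> y) = y"
  using piv_shift_greedy[of y 0] by simp

lemma piv_shift_greedy_less_1: "0 \<le> y \<Longrightarrow> y < 1 \<Longrightarrow> piv \<beta> (shift k (greedy \<beta> y)) < 1"
  using piv_shift_greedy Tb_funpow_range by simp

lemma greedy_piv:
  assumes w: "bounded_digits w" and tails: "\<forall>i. piv \<beta> (shift i w) < 1"
  shows "greedy \<beta> (piv \<beta> w) = w"
proof -
  have floor_eq: "\<lfloor>\<beta> * piv \<beta> (shift i w)\<rfloor> = int (w i)" for i
  proof -
    have "\<beta> * piv \<beta> (shift i w) = w i + piv \<beta> (shift (Suc i) w)"
      using piv_shift_Suc[OF w, of i] beta_gt_1 by (simp add: field_simps)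
    then show ?thesis
      using piv_nonneg[OF bounded_digits_shift[OF w], of "Suc i"] tails by (simp add: floor_eq_iff)
  qed
  have orbit: "(Tb \<beta> ^^ i) (piv \<beta> w) = piv \<beta> (shift i w)" for i
  proof (induction i)
    case (Suc i)
    have "\<beta> * piv \<beta> (shift i w) = w i + piv \<beta> (shift (Suc i) w)"
      using piv_shift_Suc[OF w, of i] beta_gt_1 by (simp add: field_simps)
    then show ?case using Suc floor_eq[of i] by (simp add: Tb_def)
  qed simp
  show ?thesis
    by (rule ext) (simp add: greedy_def orbit floor_eq)
qed

lemma greedy_0: "greedy \<beta> 0 = (\<lambda>_. 0)"
proof -
  have "(Tb \<beta> ^^ i) 0 = 0" for i by (induction i) (auto simp: Tb_def)
  then show ?thesis unfolding greedy_def by auto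
qed

lemma less_if_lex_less_greedy:
  assumes "0 \<le> y" "y < 1" "0 \<le> y'" "y' < 1" "lex_less (greedy \<beta> y) (greedy \<beta> y')"
  shows "y < y'"
  using lex_less_imp_piv_less[OF bounded_greedy bounded_greedy _ assms(5)]
    piv_shift_greedy_less_1 piv_greedy assms by simp

lemma lex_less_greedy_if_less:
  assumes "0 \<le> y" "y < y'" "y' < 1"
  shows "lex_less (greedy \<beta> y) (greedy \<beta> y')"
proof -
  have "greedy \<beta> y \<noteq> greedy \<beta> y'"
    using piv_greedy[of y] piv_greedy[of y'] assms by auto
  moreover have "\<not> lex_less (greedy \<beta> y') (greedy \<beta> y)"
    using less_if_lex_less_greedy[of y' y] assms by auto
  ultimately show ?thesis
    using lex_trichotomy by blast
qed

lemma greedy_lex_less_alpha: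
  assumes "0 \<le> y" "y < 1"
  shows "lex_less (greedy \<beta> y) (alpha \<beta>)"
proof (rule ccontr)
  assume "\<not> ?thesis"
  then have "piv \<beta> (alpha \<beta>) \<le> piv \<beta> (greedy \<beta> y)"
    using lex_le_imp_piv_le[OF bounded_alpha bounded_greedy[OF assms]] piv_shift_alpha_le_1
    by (simp add: not_lex_less)
  then show False
    using piv_alpha piv_greedy assms by simp
qed

lemma greedy_in_SigmaB: "0 \<le> y \<Longrightarrow> y < 1 \<Longrightarrow> greedy \<beta> y \<in> SigmaB \<beta>"
  unfolding SigmaB_def
  using greedy_le_gam shift_greedy greedy_lex_less_alpha Tb_funpow_range by simp

lemma bounded_SigmaB: "V \<in> SigmaB \<beta> \<Longrightarrow> bounded_digits V"
  unfolding SigmaB_def bounded_digits_def by blast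

lemma piv_le_if_lex_less_alpha:
  assumes V: "bounded_digits V" and less: "lex_less V (alpha \<beta>)"
    and tails: "\<forall>k. piv \<beta> (shift k V) \<le> S" and S: "1 \<le> S"
  shows "piv \<beta> V \<le> 1 + (S - 1) / \<beta>"
proof -
  obtain n where n: "\<forall>i<n. V i = alpha \<beta> i" "V n < alpha \<beta> n"
    using less unfolding lex_less_def by blast
  have diff: "1 - piv \<beta> V = (real (alpha \<beta> n) - real (V n) +
      piv \<beta> (shift (Suc n) (alpha \<beta>)) - piv \<beta> (shift (Suc n) V)) / \<beta> ^ Suc n"
    using piv_diff_first_difference[OF V bounded_alpha n(1)] piv_alpha by simp
  have "real (V n) + 1 \<le> real (alpha \<beta> n)"
    using n(2) by simp
  then have "1 - S \<le> real (alpha \<beta> n) - real (V n) +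
      piv \<beta> (shift (Suc n) (alpha \<beta>)) - piv \<beta> (shift (Suc n) V)"
    using tails[rule_format, of "Suc n"] piv_nonneg[OF bounded_digits_shift[OF bounded_alpha], of "Suc n"]
    by linarith
  then have "(1 - S) / \<beta> ^ Suc n \<le> 1 - piv \<beta> V"
    unfolding diff using beta_gt_1 by (intro divide_right_mono) auto
  moreover have "(S - 1) / \<beta> ^ Suc n \<le> (S - 1) / \<beta>"
    using S beta_gt_1 by (intro divide_left_mono) auto
  moreover have "(S - 1) / \<beta> ^ Suc n = - ((1 - S) / \<beta> ^ Suc n)"
    by (simp add: minus_divide_left)
  ultimately show ?thesis
    by linarith
qed

text \<open>If the supremum \<open>S\<close> of the tail values exceeded 1, the previous lemma applied to every
  tail would give \<open>S \<le> 1 + (S - 1) / \<beta>\<close>.\<close>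

lemma SigmaB_piv_shift_le_1:
  assumes V: "V \<in> SigmaB \<beta>"
  shows "piv \<beta> (shift k V) \<le> 1"
proof -
  have bV: "bounded_digits V" using bounded_SigmaB[OF V] .
  have adm: "lex_less (shift k V) (alpha \<beta>)" for k using V unfolding SigmaB_def by blast
  define f where "f k = piv \<beta> (shift k V)" for k
  have "f k \<le> gam \<beta> / (\<beta> - 1)" for k
    using V piv_le_geometric[of "shift k V" "gam \<beta>"] unfolding f_def SigmaB_def
    by (simp add: shift_apply)
  then have "bdd_above (range f)" by (intro bdd_aboveI) auto
  then have f_le_S: "f k \<le> (SUP k. f k)" for k by (intro cSUP_upper) auto
  define S where "S = (SUP k. f k)"
  have "S \<le> 1"
  proof (rule ccontr)
    assume S: "\<not> S \<le> 1"
    have "f k \<le> 1 + (S - 1) / \<beta>" for k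
      using S f_le_S unfolding f_def S_def
      by (intro piv_le_if_lex_less_alpha[OF bounded_digits_shift[OF bV] adm]) auto
    then have "S \<le> 1 + (S - 1) / \<beta>"
      unfolding S_def by (intro cSUP_least) auto
    moreover have "(S - 1) / \<beta> < S - 1"
      using S beta_gt_1 by (simp add: divide_less_eq)
    ultimately show False
      by simp
  qed
  then show ?thesis using f_le_S[of k] unfolding f_def S_def by simp
qed

end

section \<open>\<open>\<beta>\<close>-rational numbers and the sequence \<open>\<tilde>r'\<close>\<close>

lemma rlen_eqI:
  assumes "m > 0" "greedy \<beta> r (m - 1) \<noteq> 0" "\<forall>i\<ge>m. greedy \<beta> r i = 0"
  shows "rlen \<beta> r = m"
  unfolding rlen_def
proof (rule the_equality)
  fix m' assume m': "m' > 0 \<and> greedy \<beta> r (m' - 1) \<noteq> 0 \<and> (\<forall>i\<ge>m'. greedy \<beta> r i = 0)"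
  show "m' = m"
  proof (rule ccontr)
    assume "m' \<noteq> m"
    then consider "m' \<le> m - 1" | "m \<le> m' - 1" using assms(1) m' by linarith
    then show False
      by cases (use assms m' in auto)
  qed
qed (use assms in blast)

lemma rlenD:
  assumes "beta_rational \<beta> r"
  shows "0 < rlen \<beta> r" "greedy \<beta> r (rlen \<beta> r - 1) \<noteq> 0" "\<forall>i\<ge>rlen \<beta> r. greedy \<beta> r i = 0"
proof -
  obtain m where "m > 0" "greedy \<beta> r (m - 1) \<noteq> 0" "\<forall>i\<ge>m. greedy \<beta> r i = 0"
    using assms unfolding beta_rational_def by blast
  moreover from calculation have "rlen \<beta> r = m" by (rule rlen_eqI)
  ultimately show "0 < rlen \<beta> r" "greedy \<beta> r (rlen \<beta> r - 1) \<noteq> 0"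
      "\<forall>i\<ge>rlen \<beta> r. greedy \<beta> r i = 0"
    by simp_all
qed

lemma rper_apply: "rper \<beta> r i = greedy \<beta> r (i mod rlen \<beta> r)"
  by (simp add: rper_def)

lemma rper_block: "i < rlen \<beta> r \<Longrightarrow> rper \<beta> r (p * rlen \<beta> r + i) = greedy \<beta> r i"
  by (simp add: rper_apply)

lemma shift_blocks_lex_less_greedy:
  assumes r: "beta_rational \<beta> r" and d: "\<forall>i<d. W i = rper \<beta> r i" "W d < rper \<beta> r d"
  shows "lex_less (shift (d div rlen \<beta> r * rlen \<beta> r) W) (greedy \<beta> r)"
proof (rule lex_lessI[of "d mod rlen \<beta> r"])
  let ?m = "rlen \<beta> r"
  have d_eq: "d = d div ?m * ?m + d mod ?m"
    by (rule div_mult_mod_eq[symmetric])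
  have d_mod: "d mod ?m < ?m"
    using rlenD(1)[OF r] by simp
  show "\<forall>i<d mod ?m. shift (d div ?m * ?m) W i = greedy \<beta> r i"
    using d(1) rper_block d_eq d_mod by (auto simp: shift_apply add.commute)
  show "shift (d div ?m * ?m) W (d mod ?m) < greedy \<beta> r (d mod ?m)"
    using d(2) rper_block[OF d_mod, of "d div ?m"] d_eq by (simp add: shift_apply add.commute)
qed

lemma shift_eq_greedy_if_last_block:
  assumes r: "beta_rational \<beta> r"
    and agree: "\<forall>i<Suc p * rlen \<beta> r. W i = rper \<beta> r i"
    and zero: "\<forall>i\<ge>Suc p * rlen \<beta> r. W i = 0"
  shows "shift (p * rlen \<beta> r) W = greedy \<beta> r"
proof
  fix i
  let ?m = "rlen \<beta> r"
  show "shift (p * ?m) W i = greedy \<beta> r i"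
  proof (cases "i < ?m")
    case True
    then show ?thesis
      using agree rper_block[OF True, of p] by (simp add: shift_apply add.commute)
  next
    case False
    then show ?thesis
      using zero rlenD(3)[OF r] by (simp add: shift_apply)
  qed
qed

definition carry_pos :: "real \<Rightarrow> (nat \<Rightarrow> nat) \<Rightarrow> nat" where
  "carry_pos \<beta> x = (LEAST k. lex_le (alpha \<beta>) (shift k x))"

lemma rstep_eq:
  "rstep \<beta> x = (\<lambda>i. if i < carry_pos \<beta> x - 1 then x i else if i = carry_pos \<beta> x - 1 then x i + 1 else 0)"
  unfolding rstep_def carry_pos_def Let_def ..

lemma rstep_eq_0: "0 < carry_pos \<beta> x \<Longrightarrow> carry_pos \<beta> x \<le> i \<Longrightarrow> rstep \<beta> x i = 0"
  unfolding rstep_eq by auto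

lemma lex_less_rstep: "lex_less x (rstep \<beta> x)"
  unfolding rstep_eq by (rule lex_lessI[of "carry_pos \<beta> x - 1"]) auto

lemma lex_le_funpow_rstep: "lex_le x ((rstep \<beta> ^^ n) x)"
proof (induction n)
  case (Suc n)
  then show ?case
    using lex_less_rstep[of "(rstep \<beta> ^^ n) x" \<beta>] lex_le_less_trans unfolding lex_le_def by auto
qed (simp add: lex_le_refl)

context beta_expansions
begin

lemma lex_le_alpha_shift_carry_pos:
  assumes "x \<notin> SigmaB \<beta>"
  shows "lex_le (alpha \<beta>) (shift (carry_pos \<beta> x) x)"
proof -
  have "\<exists>k. lex_le (alpha \<beta>) (shift k x)"
  proof (cases "\<forall>i. x i \<le> gam \<beta>")
    case False
    then obtain i where "gam \<beta> < x i" by (auto simp: not_le)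
    then have "lex_less (alpha \<beta>) (shift i x)"
      using alpha_0 by (intro lex_lessI[of 0]) (auto simp: shift_apply)
    then show ?thesis unfolding lex_le_def by blast
  qed (use assms in \<open>auto simp: SigmaB_def not_lex_less\<close>)
  then show ?thesis
    unfolding carry_pos_def by (rule LeastI_ex)
qed

lemma carry_pos_pos:
  assumes "W \<in> SigmaB \<beta>" "lex_le x W" "x \<notin> SigmaB \<beta>"
  shows "0 < carry_pos \<beta> x"
proof (rule ccontr)
  assume "\<not> 0 < carry_pos \<beta> x"
  then have "lex_le (alpha \<beta>) x"
    using lex_le_alpha_shift_carry_pos[OF assms(3)] by simp
  then have alpha_le: "lex_le (alpha \<beta>) W"
    using assms(2) by (rule lex_le_trans)
  have "lex_less (shift 0 W) (alpha \<beta>)"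
    using assms(1) unfolding SigmaB_def by blast
  then have "lex_less W W"
    using lex_less_le_trans[OF _ alpha_le] by simp
  then show False
    by (simp add: lex_less_irrefl)
qed

lemma rstep_lex_le:
  assumes W: "W \<in> SigmaB \<beta>" and x: "x \<notin> SigmaB \<beta>" "lex_le x W"
  shows "lex_le (rstep \<beta> x) W"
proof -
  let ?j = "carry_pos \<beta> x"
  have adm: "lex_less (shift k W) (alpha \<beta>)" for k
    using W unfolding SigmaB_def by blast
  have "x \<noteq> W" using x W by blast
  then obtain d where d: "\<forall>i<d. x i = W i" "x d < W d"
    using x(2) unfolding lex_le_def lex_less_def by blast
  have "d < ?j"
  proof (rule ccontr)
    assume "\<not> d < ?j"
    then have "lex_less (alpha \<beta>) (shift ?j W)"
      using lex_le_less_trans[OF lex_le_alpha_shift_carry_pos[OF x(1)] lex_less_shift[OF d]] by simp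
    then show False using adm lex_less_asym by blast
  qed
  show ?thesis
  proof (cases "d < ?j - 1")
    case True
    then show ?thesis
      unfolding lex_le_def rstep_eq using d by (intro disjI1 lex_lessI[of d]) auto
  next
    case False
    then have "d = ?j - 1" using \<open>d < ?j\<close> by simp
    then have "\<forall>i. rstep \<beta> x i \<le> W i"
      unfolding rstep_eq using d by (auto simp: less_Suc_eq_le)
    then show ?thesis by (rule lex_le_if_le)
  qed
qed

lemma funpow_rstep_lex_le:
  assumes W: "W \<in> SigmaB \<beta>" and "lex_le x W"
    and outside: "\<forall>m<n. (rstep \<beta> ^^ m) x \<notin> SigmaB \<beta>"
  shows "lex_le ((rstep \<beta> ^^ n) x) W"
  using outside
proof (induction n)
  case (Suc n)
  then show ?case
    using rstep_lex_le[OF W, of "(rstep \<beta> ^^ n) x"] by simp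
qed (use assms in simp)

text \<open>The carry position strictly decreases along the algorithm, since after a carry at
  \<open>j\<close> all digits from \<open>j\<close> on vanish and \<open>0\<^sup>\<infinity>\<close> is lexicographically below \<^term>\<open>alpha \<beta>\<close>.\<close>

lemma rstep_terminates:
  assumes W: "W \<in> SigmaB \<beta>" and "lex_le x W"
  shows "\<exists>n. (rstep \<beta> ^^ n) x \<in> SigmaB \<beta>"
proof (rule ccontr)
  assume "\<not> ?thesis"
  then have outside: "(rstep \<beta> ^^ n) x \<notin> SigmaB \<beta>" for n by blast
  define J where "J n = carry_pos \<beta> ((rstep \<beta> ^^ n) x)" for n
  have J_pos: "0 < J n" for n
    unfolding J_def using carry_pos_pos[OF W funpow_rstep_lex_le[OF assms] outside] outside by blast
  have decreasing: "J (Suc n) < J n" for n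
  proof (rule ccontr)
    assume "\<not> J (Suc n) < J n"
    then have "(rstep \<beta> ^^ Suc n) x (i + J (Suc n)) = 0" for i
      using rstep_eq_0 J_pos[of n] unfolding J_def by simp
    then have "shift (J (Suc n)) ((rstep \<beta> ^^ Suc n) x) = (\<lambda>_. 0)"
      by (auto simp: shift_apply)
    then have "lex_le (alpha \<beta>) (\<lambda>_. 0)"
      using lex_le_alpha_shift_carry_pos[OF outside, of "Suc n"] unfolding J_def by simp
    then show False
      using zero_lex_less_alpha not_lex_less by blast
  qed
  have "J n + n \<le> J 0" for n
  proof (induction n)
    case (Suc n)
    then show ?case using decreasing[of n] by simp
  qed simp
  from this[of "Suc (J 0)"] show False
    by simp
qed

text \<open>\<open>\<tilde>r'\<close> is the least element of \<open>\<Sigma>\<^sub>\<beta>\<close> above \<open>(r\<^sub>1\<dots>r\<^sub>m)\<^sup>\<infinity>\<close>; the algorithm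
  terminates because \<open>b(\<gamma>/\<beta>, \<beta>) \<in> \<Sigma>\<^sub>\<beta>\<close> lies above that word.\<close>

lemma
  assumes r: "beta_rational \<beta> r" "rper \<beta> r \<notin> SigmaB \<beta>" "greedy \<beta> r 0 \<noteq> gam \<beta>"
  shows rtilde_in_SigmaB: "rtilde \<beta> r \<in> SigmaB \<beta>"
    and rper_lex_le_rtilde: "lex_le (rper \<beta> r) (rtilde \<beta> r)"
    and rtilde_lex_le: "W \<in> SigmaB \<beta> \<Longrightarrow> lex_le (rper \<beta> r) W \<Longrightarrow> lex_le (rtilde \<beta> r) W"
proof -
  have r01: "0 \<le> r" "r < 1" using r(1) unfolding beta_rational_def by auto
  define W0 where "W0 = greedy \<beta> (gam \<beta> / \<beta>)"
  have W0: "W0 \<in> SigmaB \<beta>"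
    unfolding W0_def using beta_gt_1 gam_less by (intro greedy_in_SigmaB) (auto simp: divide_less_eq)
  have "W0 0 = gam \<beta>"
    unfolding W0_def greedy_def using beta_gt_1 by simp
  moreover have "greedy \<beta> r 0 < gam \<beta>"
    using greedy_le_gam[OF r01] r(3) le_neq_implies_less by blast
  ultimately have "lex_le (rper \<beta> r) W0"
    unfolding lex_le_def by (intro disjI1 lex_lessI[of 0]) (auto simp: rper_apply)
  then have ex: "\<exists>n. (rstep \<beta> ^^ n) (rper \<beta> r) \<in> SigmaB \<beta>"
    by (rule rstep_terminates[OF W0])
  define n where "n = (LEAST n. (rstep \<beta> ^^ n) (rper \<beta> r) \<in> SigmaB \<beta>)"
  have rtilde: "rtilde \<beta> r = (rstep \<beta> ^^ n) (rper \<beta> r)"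
    unfolding rtilde_def n_def Let_def ..
  show "rtilde \<beta> r \<in> SigmaB \<beta>"
    unfolding rtilde n_def by (rule LeastI_ex[OF ex])
  show "lex_le (rper \<beta> r) (rtilde \<beta> r)"
    unfolding rtilde by (rule lex_le_funpow_rstep)
  have "\<forall>m<n. (rstep \<beta> ^^ m) (rper \<beta> r) \<notin> SigmaB \<beta>"
    unfolding n_def by (blast dest: not_less_Least)
  then show "lex_le (rtilde \<beta> r) W" if "W \<in> SigmaB \<beta>" "lex_le (rper \<beta> r) W"
    unfolding rtilde using funpow_rstep_lex_le[OF that] by blast
qed

lemma rstar_le_1:
  assumes "beta_rational \<beta> r"
  shows "rstar \<beta> r \<le> 1"
  using SigmaB_piv_shift_le_1[of "rper \<beta> r" 0] SigmaB_piv_shift_le_1[of "rtilde \<beta> r" 0]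
    rtilde_in_SigmaB[OF assms] piv_alpha
  unfolding rstar_def by auto

end

section \<open>Parameters in \<open>I\<^sub>r\<^sup>*\<close> are not bifurcation parameters\<close>

context beta_expansions
begin

text \<open>If \<open>y > r\<close> has an expansion below \<open>(r\<^sub>1\<dots>r\<^sub>m)\<^sup>\<infinity>\<close>, cut it at the block where the first
  difference occurs: the orbit point there is smaller than \<open>r\<close>, hence \<open>0\<close>, so the previous block
  is exactly \<open>r\<^sub>1\<dots>r\<^sub>m\<close> followed by zeros and the orbit hits \<open>r\<close>.\<close>

lemma rper_lex_le_greedy:
  assumes r: "beta_rational \<beta> r" and y: "r < y" "y < 1"
    and avoid: "\<forall>k. (Tb \<beta> ^^ k) y \<notin> {0<..r}"
  shows "lex_le (rper \<beta> r) (greedy \<beta> y)"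
proof (rule ccontr)
  let ?W = "greedy \<beta> y" and ?m = "rlen \<beta> r"
  have r01: "0 < r" "r < 1" using r unfolding beta_rational_def by auto
  have y0: "0 \<le> y" using y r01 by simp
  assume "\<not> lex_le (rper \<beta> r) ?W"
  then obtain d where d: "\<forall>i<d. ?W i = rper \<beta> r i" "?W d < rper \<beta> r d"
    unfolding not_lex_less[symmetric] lex_less_def by blast
  define q where "q = d div ?m"
  have "(Tb \<beta> ^^ (q * ?m)) y < r"
    using less_if_lex_less_greedy Tb_funpow_range[OF y0 y(2)] r01
      shift_blocks_lex_less_greedy[OF r d] unfolding q_def by (simp add: shift_greedy)
  then have T0: "(Tb \<beta> ^^ (q * ?m)) y = 0"
    using avoid[rule_format, of "q * ?m"] Tb_funpow_range[OF y0 y(2), of "q * ?m"] by auto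
  show False
  proof (cases q)
    case 0
    then show False using T0 y r01 by simp
  next
    case (Suc p)
    have "?W i = 0" if "q * ?m \<le> i" for i
      using shift_greedy[of "q * ?m" y] T0 greedy_0 that
      by (metis le_add_diff_inverse2 shift_apply)
    moreover have "q * ?m \<le> d"
      unfolding q_def by simp
    ultimately have "shift (p * ?m) ?W = greedy \<beta> r"
      using d(1) Suc by (intro shift_eq_greedy_if_last_block[OF r]) auto
    then have "(Tb \<beta> ^^ (p * ?m)) y = r"
      using piv_shift_greedy[OF y0 y(2), of "p * ?m"] piv_greedy[of r] r01 by simp
    then show False
      using avoid[rule_format, of "p * ?m"] r01 by simp
  qed
qed

text \<open>The orbit stays in \<open>(r, 1)\<close> only while every digit equals \<open>\<gamma>\<close>, and the fixed point
  \<open>\<gamma> / (\<beta> - 1) \<ge> 1\<close> of \<open>x \<mapsto> \<beta> x - \<gamma>\<close> repels such orbits.\<close>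

lemma orbit_enters_if_leading_digit_gam:
  assumes r: "beta_rational \<beta> r" and r_1: "greedy \<beta> r 0 = gam \<beta>" and y: "r < y" "y < 1"
  shows "\<exists>k. (Tb \<beta> ^^ k) y \<in> {0<..r}"
proof (rule ccontr)
  assume "\<not> ?thesis"
  then have avoid: "\<forall>k. (Tb \<beta> ^^ k) y \<notin> {0<..r}" by blast
  have r01: "0 < r" "r < 1" using r unfolding beta_rational_def by auto
  have "r = (greedy \<beta> r 0 + piv \<beta> (shift 1 (greedy \<beta> r))) / \<beta>"
    using piv_greedy[of r] piv_shift_Suc[OF bounded_greedy, of r 0] r01 by simp
  moreover have "0 \<le> piv \<beta> (shift 1 (greedy \<beta> r))"
    using piv_nonneg[OF bounded_digits_shift[OF bounded_greedy]] r01 by simp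
  ultimately have gam_le: "real (gam \<beta>) \<le> \<beta> * r"
    using r_1 beta_gt_1 by (simp add: field_simps)
  define c where "c = real (gam \<beta>) / (\<beta> - 1)"
  have c1: "1 \<le> c" unfolding c_def using gam_ge beta_gt_1 by (simp add: le_divide_eq)
  have c_fixed: "\<beta> * c - gam \<beta> = c" unfolding c_def using beta_gt_1 by (simp add: field_simps)
  have orbit: "r < (Tb \<beta> ^^ k) y \<and> c - (Tb \<beta> ^^ k) y = \<beta> ^ k * (c - y)" for k
  proof (induction k)
    case (Suc k)
    define z where "z = (Tb \<beta> ^^ k) y"
    have z: "r < z" "z < 1" "c - z = \<beta> ^ k * (c - y)"
      using Suc Tb_funpow_range[of y k] y r01 unfolding z_def by auto
    have "\<beta> * r < \<beta> * z" "\<beta> * z < \<beta>" using z(1,2) beta_gt_1 by simp_all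
    then have "gam \<beta> < \<beta> * z" "\<beta> * z < gam \<beta> + 1" using gam_le gam_ge by linarith+
    then have "\<lfloor>\<beta> * z\<rfloor> = int (gam \<beta>)"
      by (simp add: floor_eq_iff)
    then have T: "(Tb \<beta> ^^ Suc k) y = \<beta> * z - gam \<beta>"
      unfolding z_def by (simp add: Tb_def)
    then have "r < (Tb \<beta> ^^ Suc k) y"
      using avoid[rule_format, of "Suc k"] \<open>gam \<beta> < \<beta> * z\<close> by auto
    moreover have "c - (Tb \<beta> ^^ Suc k) y = \<beta> * (c - z)"
      using T c_fixed by (simp add: algebra_simps)
    ultimately show ?case using z(3) by simp
  qed (use y in simp)
  obtain k where k: "c / (c - y) < \<beta> ^ k"
    using real_arch_pow[OF beta_gt_1] by blast
  then have "c < \<beta> ^ k * (c - y)"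
    using c1 y by (simp add: divide_less_eq)
  then show False
    using orbit[of k] r01 by simp
qed

lemma orbit_enters_below_rstar:
  assumes r: "beta_rational \<beta> r" and y: "r < y" "y < rstar \<beta> r"
  shows "\<exists>k. (Tb \<beta> ^^ k) y \<in> {0<..r}"
proof (rule ccontr)
  assume "\<not> ?thesis"
  then have avoid: "\<forall>k. (Tb \<beta> ^^ k) y \<notin> {0<..r}" by blast
  have r01: "0 < r" "r < 1" using r unfolding beta_rational_def by auto
  have y01: "0 \<le> y" "y < 1" using y rstar_le_1[OF r] r01 by auto
  have rper_le: "lex_le (rper \<beta> r) (greedy \<beta> y)"
    using rper_lex_le_greedy[OF r y(1) y01(2) avoid] .
  have "rstar \<beta> r \<le> y"
  proof (cases "rper \<beta> r \<in> SigmaB \<beta>")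
    case True
    then show ?thesis
      using lex_le_imp_piv_le[OF bounded_SigmaB bounded_greedy[OF y01] _ rper_le]
        SigmaB_piv_shift_le_1 piv_greedy[OF y01] unfolding rstar_def by simp
  next
    case False
    have "greedy \<beta> r 0 \<noteq> gam \<beta>"
      using orbit_enters_if_leading_digit_gam[OF r _ y(1) y01(2)] avoid by blast
    note carry = False this
    have "lex_le (rtilde \<beta> r) (greedy \<beta> y)"
      using rtilde_lex_le[OF r carry greedy_in_SigmaB[OF y01] rper_le] .
    then show ?thesis
      using lex_le_imp_piv_le[OF bounded_SigmaB bounded_greedy[OF y01]] rtilde_in_SigmaB[OF r carry]
        SigmaB_piv_shift_le_1 piv_greedy[OF y01] carry unfolding rstar_def by simp
  qed
  then show False using y by simp
qed

lemma Kset_eq: "0 < s \<Longrightarrow> s < 1 \<Longrightarrow> Kset \<beta> s = {x \<in> {0..<1}. \<forall>k. (Tb \<beta> ^^ k) x \<notin> {0<..<s}}"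
  unfolding Kset_def by simp

lemma Kset_subset_in_Istar:
  assumes r: "beta_rational \<beta> r" and s: "s \<in> Istar \<beta> r" "s' \<in> Istar \<beta> r"
  shows "Kset \<beta> s \<subseteq> Kset \<beta> s'"
proof
  have r01: "0 < r" "r < 1" using r unfolding beta_rational_def by auto
  have s01: "0 < s" "s < 1" "0 < s'" "s' < 1"
    using s rstar_le_1[OF r] r01 unfolding Istar_def by auto
  fix x assume "x \<in> Kset \<beta> s"
  then have x: "x \<in> {0..<1}" "\<forall>k. (Tb \<beta> ^^ k) x \<notin> {0<..<s}"
    using Kset_eq s01 by auto
  have "(Tb \<beta> ^^ k) x \<notin> {0<..<s'}" for k
  proof
    assume k: "(Tb \<beta> ^^ k) x \<in> {0<..<s'}"
    then have "r < (Tb \<beta> ^^ k) x" "(Tb \<beta> ^^ k) x < rstar \<beta> r"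
      using x(2) s unfolding Istar_def by force+
    then obtain k' where "(Tb \<beta> ^^ k') ((Tb \<beta> ^^ k) x) \<in> {0<..r}"
      using orbit_enters_below_rstar[OF r] by blast
    then have "(Tb \<beta> ^^ (k' + k)) x \<in> {0<..<s}"
      using s unfolding Istar_def by (auto simp: funpow_add)
    then show False using x(2) by blast
  qed
  then show "x \<in> Kset \<beta> s'"
    using Kset_eq s01 x(1) by auto
qed

lemma not_bifurcation_in_Istar:
  assumes r: "r \<in> QB \<beta>" and t: "t \<in> Istar \<beta> r"
  shows "t \<in> {0..<1} - Ubif \<beta>"
proof -
  have r: "beta_rational \<beta> r" using r unfolding QB_def by simp
  have t01: "0 < t" "t < 1"
    using t rstar_le_1[OF r] r unfolding Istar_def beta_rational_def by auto
  define \<delta> where "\<delta> = min (t - r) (rstar \<beta> r - t)"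
  have near: "Kset \<beta> t' = Kset \<beta> t" if "\<bar>t' - t\<bar> < \<delta>" for t'
    using that t Kset_subset_in_Istar[OF r] unfolding Istar_def \<delta>_def
    by (intro equalityI) (simp_all add: abs_less_iff)
  have "\<not> bifurcation \<beta> t"
  proof
    assume "bifurcation \<beta> t"
    then have "\<forall>\<delta>>0. \<exists>t'\<in>{0..1}. \<bar>t' - t\<bar> < \<delta> \<and> Kset \<beta> t' \<noteq> Kset \<beta> t"
      using t01 unfolding bifurcation_def by auto
    moreover have "0 < \<delta>"
      using t unfolding Istar_def \<delta>_def by simp
    ultimately show False
      using near by blast
  qed
  then show ?thesis
    unfolding Ubif_def using t01 by simp
qed

end

section \<open>Every other parameter lies in some \<open>I\<^sub>r\<^sup>*\<close>\<close>

definition trunc_digits :: "nat \<Rightarrow> (nat \<Rightarrow> nat) \<Rightarrow> nat \<Rightarrow> nat" where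
  "trunc_digits n w = (\<lambda>i. if i < n then w i else 0)"

context beta_expansions
begin

lemma bifurcation_if_mem_Kset:
  assumes t: "0 < t" "t < 1" and "t \<in> Kset \<beta> t"
  shows "bifurcation \<beta> t"
proof -
  have "\<exists>t'\<in>{0..1}. \<bar>t' - t\<bar> < \<delta> \<and> Kset \<beta> t' \<noteq> Kset \<beta> t" if "\<delta> > 0" for \<delta>
  proof (intro bexI conjI)
    define t' where "t' = min (t + \<delta> / 2) 1"
    show "t' \<in> {0..1}" "\<bar>t' - t\<bar> < \<delta>"
      unfolding t'_def using t that by auto
    have "t \<notin> Kset \<beta> t'"
    proof (cases "t' = 1")
      case False
      then have "t' < 1" unfolding t'_def by simp
      moreover have "t < t'" unfolding t'_def using t that by simp
      ultimately show ?thesis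
        using Kset_eq[of t'] t by (auto intro: exI[of _ 0])
    qed (use t Kset_def in simp)
    then show "Kset \<beta> t' \<noteq> Kset \<beta> t"
      using \<open>t \<in> Kset \<beta> t\<close> by blast
  qed
  then show ?thesis
    unfolding bifurcation_def using t by simp
qed

lemma orbit_enters_earlier_if_digit_0:
  assumes t: "0 \<le> t" "t < 1" and enter: "(Tb \<beta> ^^ Suc n) t \<in> {0<..<t}" and "greedy \<beta> t n = 0"
  shows "(Tb \<beta> ^^ n) t \<in> {0<..<t}"
proof -
  have eq: "(Tb \<beta> ^^ Suc n) t = \<beta> * (Tb \<beta> ^^ n) t"
    using Tb_funpow_Suc[of n t] Tb_funpow_range[OF t] \<open>greedy \<beta> t n = 0\<close> by simp
  then have pos: "0 < (Tb \<beta> ^^ n) t"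
    using enter beta_gt_1 by (simp add: zero_less_mult_iff)
  moreover have "(Tb \<beta> ^^ n) t < \<beta> * (Tb \<beta> ^^ n) t"
    using pos beta_gt_1 by simp
  moreover have "\<beta> * (Tb \<beta> ^^ n) t < t"
    using enter eq by simp
  ultimately show ?thesis
    unfolding greaterThanLessThan_iff by linarith
qed

lemma first_return_digit_nonzero:
  assumes t: "0 \<le> t" "t < 1" and "(Tb \<beta> ^^ k) t \<in> {0<..<t}"
  obtains n where "0 < n" "greedy \<beta> t (n - 1) \<noteq> 0" "(Tb \<beta> ^^ n) t \<in> {0<..<t}"
proof -
  define n where "n = (LEAST n. (Tb \<beta> ^^ n) t \<in> {0<..<t})"
  have enter: "(Tb \<beta> ^^ n) t \<in> {0<..<t}"
    unfolding n_def by (rule LeastI) (rule assms(3))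
  then have "0 < n"
    by (cases n) auto
  moreover have "greedy \<beta> t (n - 1) \<noteq> 0"
  proof
    assume "greedy \<beta> t (n - 1) = 0"
    then have "(Tb \<beta> ^^ (n - 1)) t \<in> {0<..<t}"
      using orbit_enters_earlier_if_digit_0[OF t, of "n - 1"] enter \<open>0 < n\<close> by simp
    moreover have "(Tb \<beta> ^^ (n - 1)) t \<notin> {0<..<t}"
      using \<open>0 < n\<close> unfolding n_def by (intro not_less_Least) simp
    ultimately show False
      by blast
  qed
  ultimately show ?thesis
    using that enter by blast
qed

lemma greedy_piv_trunc_digits:
  assumes t: "0 \<le> t" "t < 1"
  shows "greedy \<beta> (piv \<beta> (trunc_digits n (greedy \<beta> t))) = trunc_digits n (greedy \<beta> t)"
proof (rule greedy_piv)
  have le: "trunc_digits n (greedy \<beta> t) i \<le> greedy \<beta> t i" for i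
    unfolding trunc_digits_def by simp
  then show "bounded_digits (trunc_digits n (greedy \<beta> t))"
    using bounded_digits_le bounded_greedy[OF t] by blast
  show "\<forall>i. piv \<beta> (shift i (trunc_digits n (greedy \<beta> t))) < 1"
  proof
    fix i
    have "piv \<beta> (shift i (trunc_digits n (greedy \<beta> t))) \<le> piv \<beta> (shift i (greedy \<beta> t))"
      using le by (intro piv_mono bounded_digits_shift bounded_greedy[OF t]) (simp add: shift_apply)
    then show "piv \<beta> (shift i (trunc_digits n (greedy \<beta> t))) < 1"
      using piv_shift_greedy_less_1[OF t, of i] by linarith
  qed
qed

lemma
  assumes t: "0 \<le> t" "t < 1" and n: "0 < n" "greedy \<beta> t (n - 1) \<noteq> 0"
  defines "r \<equiv> piv \<beta> (trunc_digits n (greedy \<beta> t))"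
  shows beta_rational_trunc_digits: "beta_rational \<beta> r"
    and rper_trunc_digits: "rper \<beta> r i = greedy \<beta> t (i mod n)"
    and diff_trunc_digits: "t - r = (Tb \<beta> ^^ n) t / \<beta> ^ n"
proof -
  have gr: "greedy \<beta> r = trunc_digits n (greedy \<beta> t)"
    unfolding r_def using greedy_piv_trunc_digits[OF t] .
  have bounded: "bounded_digits (trunc_digits n (greedy \<beta> t))"
    using bounded_digits_le[OF bounded_greedy[OF t]] by (simp add: trunc_digits_def)
  have "0 < r"
    unfolding r_def using piv_pos[OF bounded, of "n - 1"] n by (simp add: trunc_digits_def)
  moreover have "r \<le> piv \<beta> (greedy \<beta> t)"
    unfolding r_def by (intro piv_mono[OF bounded_greedy[OF t]]) (simp add: trunc_digits_def)
  then have "r < 1"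
    using piv_greedy[OF t] t by simp
  ultimately show "beta_rational \<beta> r"
    unfolding beta_rational_def using n by (intro conjI exI[of _ n]) (auto simp: gr trunc_digits_def)
  then have "rlen \<beta> r = n"
    using n by (intro rlen_eqI) (auto simp: gr trunc_digits_def)
  then show "rper \<beta> r i = greedy \<beta> t (i mod n)"
    using n by (simp add: rper_apply gr trunc_digits_def)
  have "shift n (trunc_digits n (greedy \<beta> t)) = (\<lambda>_. 0)"
    by (auto simp: trunc_digits_def shift_apply)
  then show "t - r = (Tb \<beta> ^^ n) t / \<beta> ^ n"
    using piv_diff_common_prefix[OF bounded_greedy[OF t] bounded, of n]
      piv_greedy[OF t] piv_shift_greedy[OF t, of n]
    unfolding r_def trunc_digits_def by simp
qed

lemma greedy_lex_less_rper_trunc_digits: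
  assumes t: "0 \<le> t" "t < 1" and n: "0 < n" "greedy \<beta> t (n - 1) \<noteq> 0"
    and enter: "(Tb \<beta> ^^ n) t \<in> {0<..<t}"
  shows "lex_less (greedy \<beta> t) (rper \<beta> (piv \<beta> (trunc_digits n (greedy \<beta> t))))"
proof (rule lex_less_periodic_if_shift_lex_less[OF _ _ n(1)])
  show "rper \<beta> (piv \<beta> (trunc_digits n (greedy \<beta> t))) (i + n) =
      rper \<beta> (piv \<beta> (trunc_digits n (greedy \<beta> t))) i" for i
    using rper_trunc_digits[OF t n] by simp
  show "\<forall>i<n. rper \<beta> (piv \<beta> (trunc_digits n (greedy \<beta> t))) i = greedy \<beta> t i"
    using rper_trunc_digits[OF t n] by simp
  show "lex_less (shift n (greedy \<beta> t)) (greedy \<beta> t)"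
    using lex_less_greedy_if_less[of "(Tb \<beta> ^^ n) t" t] enter t by (simp add: shift_greedy)
qed

lemma less_rstar_if_greedy_lex_less_rper:
  assumes r: "beta_rational \<beta> r" and t: "0 \<le> t" "t < 1"
    and less: "lex_less (greedy \<beta> t) (rper \<beta> r)"
  shows "t < rstar \<beta> r"
proof -
  have less_piv: "t < piv \<beta> V" if "bounded_digits V" "lex_less (greedy \<beta> t) V" for V
    using lex_less_imp_piv_less[OF bounded_greedy[OF t] that(1) _ that(2)]
      piv_shift_greedy_less_1[OF t] piv_greedy[OF t] by simp
  consider (periodic) "rper \<beta> r \<in> SigmaB \<beta>"
    | (carry_out) "rper \<beta> r \<notin> SigmaB \<beta>" "greedy \<beta> r 0 = gam \<beta>"
    | (carry) "rper \<beta> r \<notin> SigmaB \<beta>" "greedy \<beta> r 0 \<noteq> gam \<beta>"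
    by blast
  then show ?thesis
  proof cases
    case periodic
    then show ?thesis
      unfolding rstar_def using less_piv[OF bounded_SigmaB less] by simp
  next
    case carry_out
    then show ?thesis
      unfolding rstar_def using piv_alpha t by simp
  next
    case carry
    then show ?thesis
      unfolding rstar_def
      using less_piv[OF bounded_SigmaB[OF rtilde_in_SigmaB[OF r carry]]]
        lex_less_le_trans[OF less rper_lex_le_rtilde[OF r carry]] by simp
  qed
qed

lemma in_Istar_if_not_bifurcation:
  assumes t: "t \<in> {0..<1} - Ubif \<beta>"
  shows "\<exists>r\<in>QB \<beta>. t \<in> Istar \<beta> r"
proof -
  have t01: "0 \<le> t" "t < 1" and not_bif: "\<not> bifurcation \<beta> t"
    using t unfolding Ubif_def by auto
  then have "0 < t"
    unfolding bifurcation_def by fastforce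
  then have "t \<notin> Kset \<beta> t"
    using bifurcation_if_mem_Kset not_bif t01 by blast
  then have "\<exists>k. (Tb \<beta> ^^ k) t \<in> {0<..<t}"
    using Kset_eq[of t] \<open>0 < t\<close> t01 by auto
  then obtain n where n: "0 < n" "greedy \<beta> t (n - 1) \<noteq> 0" and enter: "(Tb \<beta> ^^ n) t \<in> {0<..<t}"
    using first_return_digit_nonzero[OF t01] by blast
  define r where "r = piv \<beta> (trunc_digits n (greedy \<beta> t))"
  have "r \<in> QB \<beta>"
    unfolding QB_def r_def using beta_rational_trunc_digits[OF t01 n] by simp
  moreover have "r < t"
  proof -
    have "0 < (Tb \<beta> ^^ n) t / \<beta> ^ n"
      using enter beta_gt_1 by simp
    then show ?thesis
      using diff_trunc_digits[OF t01 n] unfolding r_def by linarith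
  qed
  moreover have "t < rstar \<beta> r"
    unfolding r_def using less_rstar_if_greedy_lex_less_rper[OF beta_rational_trunc_digits[OF t01 n] t01
      greedy_lex_less_rper_trunc_digits[OF t01 n enter]] .
  ultimately show ?thesis
    unfolding Istar_def by auto
qed

end

theorem mainTheorem5:
  fixes \<beta> :: real
  assumes "\<beta> > 1"
  shows "{0..<1} - Ubif \<beta> = (\<Union>r\<in>QB \<beta>. Istar \<beta> r)"
proof -
  interpret beta_expansions \<beta> using assms by unfold_locales
  show ?thesis
    using in_Istar_if_not_bifurcation not_bifurcation_in_Istar by blast
qed

end
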